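(* For every graph $G$, $\mathrm{ltp}(G)-1\le \mathrm{tw}(G)\le 2\,\mathrm{ltp}(G)-1$.
   Context: For a tree $T$ and integer $k$, $T[K_k]$ denotes the lexicographic product: the graph obtained from $T$ by replacing each vertex by a copy of $K_k$ and each edge by a copy of $K_{k,k}$ between the corresponding copies. The lexicographic tree product number $\mathrm{ltp}(G)$ is the minimum integer $k$ such that $G$ is a minor of $T[K_k]$ for some tree $T$. The treewidth $\mathrm{tw}(G)$ is the minimum over tree decompositions of $G$ (a tree with bags $B_x\subseteq V(G)$ such that each vertex's bags form a non-empty subtree and each edge lies in some bag) of the maximum bag size minus $1$. *)

theory Defs
  imports Main
begin

definition graph :: "'a set \<Rightarrow> 'a set set \<Rightarrow> bool" where
  "graph V E \<longleftrightarrow> finite V \<and> (\<forall>e\<in>E. \<exists>u v. e = {u, v} \<and> u \<noteq> v \<and> u \<in> V \<and> v \<in> V)"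

definition connected_in :: "'a set set \<Rightarrow> 'a set \<Rightarrow> bool" where
  "connected_in E S \<longleftrightarrow> S \<noteq> {} \<and>
     (\<forall>u\<in>S. \<forall>v\<in>S. \<exists>p. p \<noteq> [] \<and> hd p = u \<and> last p = v \<and> set p \<subseteq> S \<and>
        (\<forall>i. Suc i < length p \<longrightarrow> {p ! i, p ! Suc i} \<in> E))"

definition acyclic_graph :: "'a set \<Rightarrow> 'a set set \<Rightarrow> bool" where
  "acyclic_graph V E \<longleftrightarrow> \<not> (\<exists>c. distinct c \<and> length c \<ge> 3 \<and> set c \<subseteq> V \<and>
        (\<forall>i. Suc i < length c \<longrightarrow> {c ! i, c ! Suc i} \<in> E) \<and> {last c, hd c} \<in> E)"

definition is_tree :: "'a set \<Rightarrow> 'a set set \<Rightarrow> bool" where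
  "is_tree V E \<longleftrightarrow> graph V E \<and> connected_in E V \<and> acyclic_graph V E"

definition is_minor :: "'a set \<Rightarrow> 'a set set \<Rightarrow> 'b set \<Rightarrow> 'b set set \<Rightarrow> bool" where
  "is_minor V E W F \<longleftrightarrow> (\<exists>\<beta> :: 'a \<Rightarrow> 'b set.
      (\<forall>v\<in>V. \<beta> v \<subseteq> W \<and> connected_in F (\<beta> v)) \<and>
      (\<forall>u\<in>V. \<forall>v\<in>V. u \<noteq> v \<longrightarrow> \<beta> u \<inter> \<beta> v = {}) \<and>
      (\<forall>u v. {u, v} \<in> E \<longrightarrow> (\<exists>x\<in>\<beta> u. \<exists>y\<in>\<beta> v. {x, y} \<in> F)))"

definition lex_verts :: "'b set \<Rightarrow> nat \<Rightarrow> ('b \<times> nat) set" where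
  "lex_verts VT k = VT \<times> {0..<k}"

definition lex_edges :: "'b set \<Rightarrow> 'b set set \<Rightarrow> nat \<Rightarrow> ('b \<times> nat) set set" where
  "lex_edges VT ET k = {{(x, i), (y, j)} | x y i j. x \<in> VT \<and> y \<in> VT \<and> i < k \<and> j < k \<and>
      ((x = y \<and> i \<noteq> j) \<or> {x, y} \<in> ET)}"

text \<open>ltp(G): least k such that G is a minor of T[K_k] for some tree T
  (trees taken, up to isomorphism, on vertex set of type nat).\<close>
definition ltp :: "'a set \<Rightarrow> 'a set set \<Rightarrow> nat" where
  "ltp V E = (LEAST k. \<exists>(VT :: nat set) ET. is_tree VT ET \<and>
      is_minor V E (lex_verts VT k) (lex_edges VT ET k))"

definition tree_decomposition :: "'a set \<Rightarrow> 'a set set \<Rightarrow> nat set \<Rightarrow> nat set set \<Rightarrow> (nat \<Rightarrow> 'a set) \<Rightarrow> bool" where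
  "tree_decomposition V E VT ET B \<longleftrightarrow> is_tree VT ET \<and> (\<forall>x\<in>VT. B x \<subseteq> V) \<and>
      (\<forall>v\<in>V. connected_in ET {x \<in> VT. v \<in> B x}) \<and>
      (\<forall>e\<in>E. \<exists>x\<in>VT. e \<subseteq> B x)"

definition treewidth :: "'a set \<Rightarrow> 'a set set \<Rightarrow> int" where
  "treewidth V E = int (LEAST m. \<exists>VT ET B. tree_decomposition V E VT ET B \<and>
      (\<forall>x\<in>VT. card (B x) \<le> m)) - 1"

end

theory Submission
  imports Defs
begin

(* A tree decomposition (T, B) of width m - 1 exhibits G as a minor of T[K_m]: number the
   vertices of each bag by 0, ..., m - 1 and let the branch set of v consist of the copies
   (x, number of v in B x) for the nodes x whose bag contains v; it is connected because these
   nodes form a subtree. Conversely, given a model of G in T[K_k], root T and put into the bag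
   of a node x every vertex whose branch set meets the column of x or that of its parent.
   A column meets at most k of the disjoint branch sets, and every edge of T[K_k] lies inside
   a column or joins a node to its parent, so these bags form a tree decomposition of width at
   most 2k - 1. *)

definition edge_path :: "'a set set \<Rightarrow> 'a list \<Rightarrow> bool" where
  "edge_path E p \<longleftrightarrow> (\<forall>i. Suc i < length p \<longrightarrow> {p ! i, p ! Suc i} \<in> E)"

definition adj_on :: "'a set set \<Rightarrow> 'a set \<Rightarrow> ('a \<times> 'a) set" where
  "adj_on E S = {(a, b). a \<in> S \<and> b \<in> S \<and> {a, b} \<in> E}"

lemma edge_path_Nil [simp]: "edge_path E []"
  and edge_path_single [simp]: "edge_path E [a]"
  by (simp_all add: edge_path_def)

lemma edge_path_Cons_Cons [simp]:
  "edge_path E (a # b # p) \<longleftrightarrow> {a, b} \<in> E \<and> edge_path E (b # p)"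
  by (auto simp: edge_path_def less_Suc_eq_0_disj)

lemma edge_path_take: "edge_path E p \<Longrightarrow> edge_path E (take n p)"
  by (simp add: edge_path_def)

lemma edge_path_imp_rtrancl_adj_on:
  "p \<noteq> [] \<Longrightarrow> set p \<subseteq> S \<Longrightarrow> edge_path E p \<Longrightarrow> (hd p, last p) \<in> (adj_on E S)\<^sup>*"
proof (induction p rule: induct_list012)
  case (3 a b p)
  then have "(a, b) \<in> adj_on E S" "(b, last (b # p)) \<in> (adj_on E S)\<^sup>*"
    by (auto simp: adj_on_def)
  then show ?case by (simp add: converse_rtrancl_into_rtrancl)
qed simp_all

lemma rtrancl_adj_on_imp_edge_path:
  assumes "(u, v) \<in> (adj_on E S)\<^sup>*" "u \<in> S"
  shows "\<exists>p. p \<noteq> [] \<and> hd p = u \<and> last p = v \<and> set p \<subseteq> S \<and> edge_path E p"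
  using assms
proof (induction rule: converse_rtrancl_induct)
  case base
  then show ?case by (intro exI[of _ "[v]"]) simp
next
  case (step y z)
  then have yz: "z \<in> S" "{y, z} \<in> E" by (auto simp: adj_on_def)
  with step obtain p where "p \<noteq> []" "hd p = z" "last p = v" "set p \<subseteq> S" "edge_path E p"
    by blast
  with yz step.prems show ?case
    by (intro exI[of _ "y # p"]) (cases p, auto)
qed

lemma connected_in_iff_rtrancl:
  "connected_in E S \<longleftrightarrow> S \<noteq> {} \<and> (\<forall>u\<in>S. \<forall>v\<in>S. (u, v) \<in> (adj_on E S)\<^sup>*)"
  unfolding connected_in_def edge_path_def[symmetric]
  by (metis edge_path_imp_rtrancl_adj_on rtrancl_adj_on_imp_edge_path)

lemma rtrancl_map:
  assumes "(a, b) \<in> R\<^sup>*" "\<And>x y. (x, y) \<in> R \<Longrightarrow> (f x, f y) \<in> R'\<^sup>*"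
  shows "(f a, f b) \<in> R'\<^sup>*"
  using assms(1) by induction (auto intro: rtrancl_trans assms(2))

lemma connected_in_image:
  assumes "connected_in E S"
    and "\<And>a b. a \<in> S \<Longrightarrow> b \<in> S \<Longrightarrow> {a, b} \<in> E \<Longrightarrow> f a = f b \<or> {f a, f b} \<in> F"
  shows "connected_in F (f ` S)"
  unfolding connected_in_iff_rtrancl
proof (intro conjI ballI)
  show "f ` S \<noteq> {}" using assms(1) by (simp add: connected_in_iff_rtrancl)
next
  fix fa fb assume "fa \<in> f ` S" "fb \<in> f ` S"
  then obtain a b where ab: "a \<in> S" "b \<in> S" "fa = f a" "fb = f b" by blast
  then have "(a, b) \<in> (adj_on E S)\<^sup>*" using assms(1) by (simp add: connected_in_iff_rtrancl)
  then show "(fa, fb) \<in> (adj_on F (f ` S))\<^sup>*" unfolding ab(3,4)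
  proof (rule rtrancl_map)
    fix x y assume "(x, y) \<in> adj_on E S"
    then show "(f x, f y) \<in> (adj_on F (f ` S))\<^sup>*"
      using assms(2)[of x y] by (auto simp: adj_on_def)
  qed
qed

lemma connected_in_extend:
  assumes "connected_in E S" "S \<subseteq> T" "\<And>a. a \<in> T \<Longrightarrow> a \<in> S \<or> (\<exists>s\<in>S. {a, s} \<in> E)"
  shows "connected_in E T"
  unfolding connected_in_iff_rtrancl
proof (intro conjI ballI)
  show "T \<noteq> {}" using assms(1,2) by (auto simp: connected_in_iff_rtrancl)
  have S_conn: "(a, b) \<in> (adj_on E T)\<^sup>*" if "a \<in> S" "b \<in> S" for a b
    using rtrancl_mono[of "adj_on E S" "adj_on E T"] assms(1,2) that
    by (auto simp: connected_in_iff_rtrancl adj_on_def)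
  have to_S: "\<exists>s\<in>S. (a, s) \<in> (adj_on E T)\<^sup>* \<and> (s, a) \<in> (adj_on E T)\<^sup>*" if "a \<in> T" for a
    using assms(3)[OF that]
  proof
    assume "\<exists>s\<in>S. {a, s} \<in> E"
    then obtain s where "s \<in> S" "{a, s} \<in> E" by blast
    then have "(a, s) \<in> adj_on E T" "(s, a) \<in> adj_on E T"
      using assms(2) that by (auto simp: adj_on_def insert_commute)
    with \<open>s \<in> S\<close> show ?thesis by blast
  qed blast
  fix a b assume "a \<in> T" "b \<in> T"
  with to_S S_conn show "(a, b) \<in> (adj_on E T)\<^sup>*" by (meson rtrancl_trans)
qed

lemma graph_edge: "graph V E \<Longrightarrow> {a, b} \<in> E \<Longrightarrow> a \<noteq> b \<and> a \<in> V \<and> b \<in> V"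
  unfolding graph_def by (metis doubleton_eq_iff)

lemma graph_edgeE:
  assumes "graph V E" "e \<in> E"
  obtains a b where "e = {a, b}" "a \<noteq> b" "a \<in> V" "b \<in> V"
  using assms by (auto simp: graph_def)

lemma graph_delete_vertex: "graph V E \<Longrightarrow> graph (V - {l}) {e \<in> E. l \<notin> e}"
  unfolding graph_def by blast

lemma acyclic_graph_mono:
  "acyclic_graph V E \<Longrightarrow> V' \<subseteq> V \<Longrightarrow> E' \<subseteq> E \<Longrightarrow> acyclic_graph V' E'"
  unfolding acyclic_graph_def by blast

lemma acyclic_graph_iff:
  "acyclic_graph V E \<longleftrightarrow>
    \<not> (\<exists>c. distinct c \<and> 3 \<le> length c \<and> set c \<subseteq> V \<and> edge_path E c \<and> {last c, hd c} \<in> E)"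
  by (simp add: acyclic_graph_def edge_path_def)

lemma longest_path_exists:
  assumes "finite V" "distinct q0" "set q0 \<subseteq> V" "edge_path E q0"
  obtains q where "distinct q" "set q \<subseteq> V" "edge_path E q" "length q0 \<le> length q"
    "\<And>r. distinct r \<Longrightarrow> set r \<subseteq> V \<Longrightarrow> edge_path E r \<Longrightarrow> length r \<le> length q"
proof -
  let ?path = "\<lambda>q. distinct q \<and> set q \<subseteq> V \<and> edge_path E q"
  have "length q < Suc (card V)" if "?path q" for q
    using that assms(1) by (metis card_mono distinct_card less_Suc_eq_le)
  then obtain q where "?path q" "\<forall>r. ?path r \<longrightarrow> length r \<le> length q"
    using ex_has_greatest_nat[of ?path q0 length "Suc (card V)"] assms(2-4) by blast
  with that show ?thesis using assms(2-4) by blast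
qed

text \<open>The first vertex of a longest path is a leaf: a further neighbour outside the path
  would extend it, one on the path would close a cycle.\<close>
lemma acyclic_graph_has_leaf:
  assumes g: "graph V E" and ac: "acyclic_graph V E" and "{u, w} \<in> E"
  shows "\<exists>l y. {l, y} \<in> E \<and> (\<forall>z. {l, z} \<in> E \<longrightarrow> z = y)"
proof -
  have "finite V" using g by (simp add: graph_def)
  moreover have "distinct [u, w]" "set [u, w] \<subseteq> V" "edge_path E [u, w]"
    using graph_edge[OF g \<open>{u, w} \<in> E\<close>] \<open>{u, w} \<in> E\<close> by auto
  ultimately obtain q where q: "distinct q" "set q \<subseteq> V" "edge_path E q" "length [u, w] \<le> length q"
    and longest: "\<And>r. distinct r \<Longrightarrow> set r \<subseteq> V \<Longrightarrow> edge_path E r \<Longrightarrow> length r \<le> length q"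
    by (rule longest_path_exists) blast
  then obtain a b r where q_eq: "q = a # b # r"
    by (auto simp: Suc_le_length_iff)
  have "z = b" if az: "{a, z} \<in> E" for z
  proof (rule ccontr)
    assume "z \<noteq> b"
    have z: "z \<noteq> a" "z \<in> V" using graph_edge[OF g az] by auto
    show False
    proof (cases "z \<in> set q")
      case False
      then have "edge_path E (z # q)" "distinct (z # q)" "set (z # q) \<subseteq> V"
        using q z az by (auto simp: q_eq insert_commute)
      with longest show False by fastforce
    next
      case True
      then obtain j where j: "j < length q" "q ! j = z" by (metis in_set_conv_nth)
      with z \<open>z \<noteq> b\<close> have "2 \<le> j" by (cases j; cases "j - 1") (auto simp: q_eq)
      let ?c = "take (Suc j) q"
      have "last ?c = z" using j by (simp add: take_Suc_conv_app_nth)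
      moreover have "hd ?c = a" by (simp add: q_eq)
      ultimately have "{last ?c, hd ?c} \<in> E" using az by (simp add: insert_commute)
      moreover have "distinct ?c" "3 \<le> length ?c" "set ?c \<subseteq> V" "edge_path E ?c"
        using q j \<open>2 \<le> j\<close> by (auto dest: in_set_takeD intro: edge_path_take)
      ultimately show False
        using ac unfolding acyclic_graph_iff by blast
    qed
  qed
  moreover have "{a, b} \<in> E" using q(3) by (simp add: q_eq)
  ultimately show ?thesis by blast
qed

lemma acyclic_graph_parent_function:
  assumes "graph V E" "acyclic_graph V E"
  shows "\<exists>p. (\<forall>x. p x = x \<or> {x, p x} \<in> E) \<and> (\<forall>x y. {x, y} \<in> E \<longrightarrow> p x = y \<or> p y = x)"
  using assms
proof (induction "card V" arbitrary: V E rule: less_induct)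
  case less
  show ?case
  proof (cases "E = {}")
    case True
    then show ?thesis by (intro exI[of _ id]) auto
  next
    case False
    then obtain e where "e \<in> E" by blast
    with less.prems(1) obtain u w where "{u, w} \<in> E" by (metis graph_edgeE)
    then obtain l y where ly: "{l, y} \<in> E" and leaf: "\<And>z. {l, z} \<in> E \<Longrightarrow> z = y"
      using acyclic_graph_has_leaf[OF less.prems] by blast
    have "l \<in> V" using graph_edge[OF less.prems(1) ly] by blast
    let ?E' = "{e \<in> E. l \<notin> e}"
    have smaller: "card (V - {l}) < card V"
      using less.prems(1) \<open>l \<in> V\<close> by (metis graph_def card_Diff1_less)
    have forest: "graph (V - {l}) ?E'" "acyclic_graph (V - {l}) ?E'"
      using graph_delete_vertex[OF less.prems(1)] acyclic_graph_mono[OF less.prems(2)] by auto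
    obtain p where p_edge: "\<forall>x. p x = x \<or> {x, p x} \<in> ?E'"
      and p_orient: "\<forall>x z. {x, z} \<in> ?E' \<longrightarrow> p x = z \<or> p z = x"
      using less.hyps[OF smaller forest] by blast
    have "(p(l := y)) x = x \<or> {x, (p(l := y)) x} \<in> E" for x
      using p_edge ly by auto
    moreover have "(p(l := y)) x = z \<or> (p(l := y)) z = x" if xz: "{x, z} \<in> E" for x z
    proof (cases "x = l \<or> z = l")
      case True
      with xz leaf show ?thesis by (metis fun_upd_same insert_commute)
    next
      case False
      with xz p_orient show ?thesis by auto
    qed
    ultimately show ?thesis by blast
  qed
qed

lemma lex_edgesI:
  "x \<in> VT \<Longrightarrow> y \<in> VT \<Longrightarrow> i < k \<Longrightarrow> j < k \<Longrightarrow> (x = y \<and> i \<noteq> j) \<or> {x, y} \<in> ET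
   \<Longrightarrow> {(x, i), (y, j)} \<in> lex_edges VT ET k"
  unfolding lex_edges_def by blast

lemma lex_edgesD: "{(x, i), (y, j)} \<in> lex_edges VT ET k \<Longrightarrow> x = y \<or> {x, y} \<in> ET"
  unfolding lex_edges_def by (auto simp: doubleton_eq_iff insert_commute)

lemma ex_inj_on_lessThan_family:
  assumes "\<forall>x\<in>X. finite (B x) \<and> card (B x) \<le> m"
  shows "\<exists>h. \<forall>x\<in>X. inj_on (h x) (B x) \<and> h x ` B x \<subseteq> {..<m}"
proof -
  have "\<exists>f. inj_on f (B x) \<and> f ` B x \<subseteq> {..<m}" if x: "x \<in> X" for x
  proof -
    obtain f where "bij_betw f (B x) {0..<card (B x)}"
      using assms x by (meson ex_bij_betw_finite_nat)
    then show ?thesis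
      using assms x by (intro exI[of _ f]) (auto simp: bij_betw_def)
  qed
  then show ?thesis by metis
qed

lemma tree_decomposition_imp_minor:
  assumes g: "graph V E" and td: "tree_decomposition V E VT ET B"
    and width: "\<forall>x\<in>VT. card (B x) \<le> m"
  shows "is_minor V E (lex_verts VT m) (lex_edges VT ET m)"
proof -
  have bags: "\<forall>x\<in>VT. B x \<subseteq> V" "\<forall>v\<in>V. connected_in ET {x \<in> VT. v \<in> B x}"
    "\<forall>e\<in>E. \<exists>x\<in>VT. e \<subseteq> B x"
    using td by (auto simp: tree_decomposition_def)
  have "\<forall>x\<in>VT. finite (B x) \<and> card (B x) \<le> m"
    using g bags(1) width by (meson finite_subset graph_def)
  then obtain h where h_inj: "\<And>x. x \<in> VT \<Longrightarrow> inj_on (h x) (B x)"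
    and h_range: "\<And>x v. x \<in> VT \<Longrightarrow> v \<in> B x \<Longrightarrow> h x v < m"
    using ex_inj_on_lessThan_family[of VT B m] by (auto simp: image_subset_iff)
  define \<beta> where "\<beta> v = (\<lambda>x. (x, h x v)) ` {x \<in> VT. v \<in> B x}" for v
  show ?thesis unfolding is_minor_def
  proof (intro exI[of _ \<beta>] conjI ballI allI impI)
    fix v assume "v \<in> V"
    show "\<beta> v \<subseteq> lex_verts VT m"
      using h_range by (auto simp: \<beta>_def lex_verts_def)
    show "connected_in (lex_edges VT ET m) (\<beta> v)"
      unfolding \<beta>_def using bags(2) \<open>v \<in> V\<close>
      by (auto intro!: connected_in_image lex_edgesI h_range)
  next
    fix u w assume "u \<in> V" "w \<in> V" "u \<noteq> w"
    then show "\<beta> u \<inter> \<beta> w = {}"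
      using h_inj by (auto simp: \<beta>_def dest: inj_onD)
  next
    fix u w assume e: "{u, w} \<in> E"
    then obtain x where x: "x \<in> VT" "u \<in> B x" "w \<in> B x" using bags(3) by blast
    have "h x u \<noteq> h x w" using graph_edge[OF g e] h_inj[OF x(1)] x by (auto dest: inj_onD)
    then have "{(x, h x u), (x, h x w)} \<in> lex_edges VT ET m"
      using x h_range by (intro lex_edgesI) auto
    moreover have "(x, h x u) \<in> \<beta> u" "(x, h x w) \<in> \<beta> w" using x by (auto simp: \<beta>_def)
    ultimately show "\<exists>a\<in>\<beta> u. \<exists>b\<in>\<beta> w. {a, b} \<in> lex_edges VT ET m" by blast
  qed
qed

lemma card_branch_sets_meeting_column:
  assumes "\<forall>v\<in>V. \<beta> v \<subseteq> X \<times> {0..<k}" "\<forall>u\<in>V. \<forall>v\<in>V. u \<noteq> v \<longrightarrow> \<beta> u \<inter> \<beta> v = {}"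
  shows "card {v \<in> V. \<exists>i. (z, i) \<in> \<beta> v} \<le> k"
proof -
  let ?C = "{v \<in> V. \<exists>i. (z, i) \<in> \<beta> v}"
  define row where "row v = (SOME i. (z, i) \<in> \<beta> v)" for v
  have row: "(z, row v) \<in> \<beta> v" if "v \<in> ?C" for v
    using that unfolding row_def by (auto intro: someI)
  have "inj_on row ?C"
  proof
    fix u w assume uw: "u \<in> ?C" "w \<in> ?C" "row u = row w"
    then have "(z, row u) \<in> \<beta> u \<inter> \<beta> w" using row[OF uw(1)] row[OF uw(2)] by simp
    then show "u = w" using assms(2) uw(1,2) by blast
  qed
  moreover have "row v \<in> {0..<k}" if "v \<in> ?C" for v
    using row[OF that] assms(1) that by blast
  then have "row ` ?C \<subseteq> {0..<k}" by (rule image_subsetI)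
  ultimately show ?thesis
    using card_inj_on_le[of row ?C "{0..<k}"] by simp
qed

lemma minor_imp_tree_decomposition:
  assumes g: "graph V E" and t: "is_tree VT ET"
    and m: "is_minor V E (lex_verts VT k) (lex_edges VT ET k)"
  shows "\<exists>B. tree_decomposition V E VT ET B \<and> (\<forall>x\<in>VT. card (B x) \<le> 2 * k)"
proof -
  let ?F = "lex_edges VT ET k"
  obtain \<beta> where \<beta>_sub: "\<forall>v\<in>V. \<beta> v \<subseteq> VT \<times> {0..<k}"
    and \<beta>_conn: "\<forall>v\<in>V. connected_in ?F (\<beta> v)"
    and \<beta>_disj: "\<forall>u\<in>V. \<forall>v\<in>V. u \<noteq> v \<longrightarrow> \<beta> u \<inter> \<beta> v = {}"
    and \<beta>_edge: "\<forall>u v. {u, v} \<in> E \<longrightarrow> (\<exists>a\<in>\<beta> u. \<exists>b\<in>\<beta> v. {a, b} \<in> ?F)"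
    using m unfolding is_minor_def lex_verts_def by (elim exE conjE) blast
  obtain p where p_edge: "\<forall>x. p x = x \<or> {x, p x} \<in> ET"
    and p_orient: "\<forall>x y. {x, y} \<in> ET \<longrightarrow> p x = y \<or> p y = x"
    using acyclic_graph_parent_function[of VT ET] t unfolding is_tree_def by blast
  define C where "C z = {v \<in> V. \<exists>i. (z, i) \<in> \<beta> v}" for z
  define B where "B x = C x \<union> C (p x)" for x
  have "card (C z) \<le> k" for z
    unfolding C_def by (rule card_branch_sets_meeting_column[OF \<beta>_sub \<beta>_disj])
  then have "card (B x) \<le> 2 * k" for x
    using card_Un_le[of "C x" "C (p x)"] unfolding B_def by (metis add_mono mult_2 order_trans)
  moreover have "tree_decomposition V E VT ET B"
    unfolding tree_decomposition_def
  proof (intro conjI ballI)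
    show "is_tree VT ET" by (rule t)
    show "B x \<subseteq> V" for x by (auto simp: B_def C_def)
  next
    fix v assume "v \<in> V"
    let ?S = "fst ` \<beta> v"
    have S_conn: "connected_in ET ?S"
    proof (rule connected_in_image)
      show "connected_in ?F (\<beta> v)" using \<beta>_conn \<open>v \<in> V\<close> by blast
      show "fst a = fst b \<or> {fst a, fst b} \<in> ET" if "{a, b} \<in> ?F" for a b
        using that lex_edgesD[of "fst a" "snd a" "fst b" "snd b"] by simp
    qed
    have S_VT: "?S \<subseteq> VT" using \<beta>_sub \<open>v \<in> V\<close> by fastforce
    have bag_nodes: "{x \<in> VT. v \<in> B x} = {x \<in> VT. x \<in> ?S \<or> p x \<in> ?S}"
      using \<open>v \<in> V\<close> by (force simp: B_def C_def)
    have "a \<in> ?S \<or> (\<exists>s\<in>?S. {a, s} \<in> ET)" if "a \<in> VT" "a \<in> ?S \<or> p a \<in> ?S" for a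
      using that p_edge by metis
    then show "connected_in ET {x \<in> VT. v \<in> B x}"
      unfolding bag_nodes using S_VT by (intro connected_in_extend[OF S_conn]) auto
  next
    fix e assume "e \<in> E"
    then obtain u w where uw: "e = {u, w}" "u \<in> V" "w \<in> V" by (metis graph_edgeE g)
    obtain x i y j where xy: "(x, i) \<in> \<beta> u" "(y, j) \<in> \<beta> w" "{(x, i), (y, j)} \<in> ?F"
      using \<beta>_edge \<open>e \<in> E\<close> uw by fast
    then have "x \<in> VT" "y \<in> VT" "u \<in> C x" "w \<in> C y"
      using \<beta>_sub uw by (auto simp: C_def)
    moreover have "x = y \<or> p x = y \<or> p y = x"
      using lex_edgesD[OF xy(3)] p_orient by blast
    ultimately show "\<exists>x\<in>VT. e \<subseteq> B x"
      using uw by (auto simp: B_def)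
  qed
  ultimately show ?thesis by blast
qed

lemma is_tree_singleton: "is_tree {x} {}"
  by (simp add: is_tree_def graph_def connected_in_iff_rtrancl acyclic_graph_def)

lemma tree_decomposition_trivial:
  assumes "graph V E"
  shows "tree_decomposition V E {0} {} (\<lambda>_. V)"
proof -
  have "connected_in {} {x \<in> {0::nat}. v \<in> V}" if "v \<in> V" for v
    using that by (simp add: connected_in_iff_rtrancl)
  moreover have "e \<subseteq> V" if "e \<in> E" for e
    using assms that by (auto elim: graph_edgeE)
  ultimately show ?thesis
    by (simp add: tree_decomposition_def is_tree_singleton)
qed

theorem lemma12:
  fixes V :: "'a set" and E :: "'a set set"
  assumes "graph V E"
  shows "int (ltp V E) - 1 \<le> treewidth V E \<and> treewidth V E \<le> 2 * int (ltp V E) - 1"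
proof -
  define decomposable where "decomposable m \<longleftrightarrow>
    (\<exists>VT ET B. tree_decomposition V E VT ET B \<and> (\<forall>x\<in>VT. card (B x) \<le> m))" for m
  define embeddable where "embeddable k \<longleftrightarrow> (\<exists>(VT :: nat set) ET. is_tree VT ET \<and>
      is_minor V E (lex_verts VT k) (lex_edges VT ET k))" for k
  have tw: "treewidth V E = int (Least decomposable) - 1"
    unfolding treewidth_def decomposable_def ..
  have ltp: "ltp V E = Least embeddable"
    unfolding ltp_def embeddable_def ..
  have "decomposable (card V)"
    using tree_decomposition_trivial[OF assms] unfolding decomposable_def by blast
  then have "decomposable (Least decomposable)" by (rule LeastI)
  then obtain VT ET B where td: "tree_decomposition V E VT ET B"
    and width: "\<forall>x\<in>VT. card (B x) \<le> Least decomposable"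
    unfolding decomposable_def by blast
  have "is_tree VT ET" using td by (simp add: tree_decomposition_def)
  with tree_decomposition_imp_minor[OF assms td width]
  have "embeddable (Least decomposable)" unfolding embeddable_def by blast
  then have "Least embeddable \<le> Least decomposable" by (rule Least_le)
  from \<open>embeddable (Least decomposable)\<close> have "embeddable (Least embeddable)" by (rule LeastI)
  then obtain VT' :: "nat set" and ET' where "is_tree VT' ET'"
    "is_minor V E (lex_verts VT' (Least embeddable)) (lex_edges VT' ET' (Least embeddable))"
    unfolding embeddable_def by blast
  then have "decomposable (2 * Least embeddable)"
    using minor_imp_tree_decomposition[OF assms] unfolding decomposable_def by blast
  then have "Least decomposable \<le> 2 * Least embeddable" by (rule Least_le)
  with \<open>Least embeddable \<le> Least decomposable\<close> show ?thesis
    unfolding tw ltp by linarith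
qed

end
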